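(* Let $R$ be a commutative ring. The assignments $(M,C)\mapsto C^\sharp/C^\flat$ (with $T$ acting by $\theta_C$) and $X\mapsto(X,\mathrm{graph}(T_X))$, where $T_X\in\mathrm{End}_R(X)$ is $x\mapsto Tx$, extend to $R$-linear functors $\sharp/\flat\colon\mathrm{Rel}_R\to\mathrm{Mod}\,R[T,T^{-1}]$ (sending a morphism $f\colon(L,B)\to(M,C)$ to $\ell+B^\flat\mapsto f(\ell)+C^\flat$) and $\mathrm{graph}_T\colon\mathrm{Mod}\,R[T,T^{-1}]\to\mathrm{Rel}_R$ (sending $g$ to $g$). Moreover $(\sharp/\flat)\circ\mathrm{graph}_T$ is the identity functor on $\mathrm{Mod}\,R[T,T^{-1}]$.
   Context: An $R$-linear relation on an $R$-module $M$ is a submodule $C\subseteq M\oplus M$; $Cm=\{m':(m,m')\in C\}$, $CS=\bigcup_{m\in S}Cm$, $C^{-1}=\{(y,x):(x,y)\in C\}$, $\mathrm{graph}(f)=\{(x,f(x))\}$. $\mathrm{Rel}_R$ has objects pairs $(M,C)$ with $C$ a relation on $M$, and morphisms $(L,B)\to(M,C)$ the $R$-linear maps $f\colon L\to M$ with $(f(x),f(y))\in C$ for all $(x,y)\in B$. $C''$ is the set of $m\in M$ for which there exists $(m_n)_{n\in\mathbb{N}}$ in $M$ with $m_0=m$ and $m_{n+1}\in Cm_n$ for all $n$; $C'$ the set of those for which such a sequence exists with $m_n=0$ for $n\gg0$; $C^\sharp=C''\cap(C^{-1})''$, $C^\flat=C''\cap(C^{-1})'+(C^{-1})''\cap C'$.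 It is known that the rule $\theta_C(m+C^\flat)=m'+C^\flat$ if and only if $m'\in C^\sharp\cap(C^\flat+Cm)$ gives a well-defined $R$-module automorphism $\theta_C$ of $C^\sharp/C^\flat$; via $T\mapsto\theta_C$ this makes $C^\sharp/C^\flat$ an $R[T,T^{-1}]$-module. *)

theory Defs
  imports Complex_Main
begin

text \<open>R-modules are rendered type-wise: a commutative ring 'r :: comm_ring_1 and an
  R-module given by a scalar multiplication s :: 'r => 'm => 'm with module s
  (locale of HOL.Modules); the underlying module is the whole type 'm.\<close>

definition is_rel :: "('r::comm_ring_1 \<Rightarrow> 'm::ab_group_add \<Rightarrow> 'm) \<Rightarrow> ('m \<times> 'm) set \<Rightarrow> bool" where
  "is_rel s C \<longleftrightarrow> (0, 0) \<in> C \<and>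
     (\<forall>x y x' y'. (x, y) \<in> C \<and> (x', y') \<in> C \<longrightarrow> (x + x', y + y') \<in> C) \<and>
     (\<forall>r x y. (x, y) \<in> C \<longrightarrow> (s r x, s r y) \<in> C)"

definition rel_mor :: "('r::comm_ring_1 \<Rightarrow> 'l::ab_group_add \<Rightarrow> 'l) \<Rightarrow> ('r \<Rightarrow> 'm::ab_group_add \<Rightarrow> 'm)
    \<Rightarrow> ('l \<times> 'l) set \<Rightarrow> ('m \<times> 'm) set \<Rightarrow> ('l \<Rightarrow> 'm) \<Rightarrow> bool" where
  "rel_mor sL sM B C f \<longleftrightarrow> module_hom sL sM f \<and> (\<forall>x y. (x, y) \<in> B \<longrightarrow> (f x, f y) \<in> C)"

definition graph :: "('m \<Rightarrow> 'm) \<Rightarrow> ('m \<times> 'm) set" where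
  "graph f = {(x, f x) | x. True}"

definition set_plus :: "'m::ab_group_add set \<Rightarrow> 'm set \<Rightarrow> 'm set" where
  "set_plus A B = {a + b | a b. a \<in> A \<and> b \<in> B}"

definition dprime :: "('m::ab_group_add \<times> 'm) set \<Rightarrow> 'm set" where
  "dprime C = {m. \<exists>s::nat \<Rightarrow> 'm. s 0 = m \<and> (\<forall>n. s (Suc n) \<in> C `` {s n})}"

definition sprime :: "('m::ab_group_add \<times> 'm) set \<Rightarrow> 'm set" where
  "sprime C = {m. \<exists>s::nat \<Rightarrow> 'm. s 0 = m \<and> (\<forall>n. s (Suc n) \<in> C `` {s n}) \<and> (\<exists>N. \<forall>n\<ge>N. s n = 0)}"

definition sharp :: "('m::ab_group_add \<times> 'm) set \<Rightarrow> 'm set" where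
  "sharp C = dprime C \<inter> dprime (C\<inverse>)"

definition flat :: "('m::ab_group_add \<times> 'm) set \<Rightarrow> 'm set" where
  "flat C = set_plus (dprime C \<inter> sprime (C\<inverse>)) (dprime (C\<inverse>) \<inter> sprime C)"

definition coset :: "('m::ab_group_add \<times> 'm) set \<Rightarrow> 'm \<Rightarrow> 'm set" where
  "coset C m = (\<lambda>c. m + c) ` flat C"

definition quot :: "('m::ab_group_add \<times> 'm) set \<Rightarrow> 'm set set" where
  "quot C = coset C ` sharp C"

definition qadd :: "'m::ab_group_add set \<Rightarrow> 'm set \<Rightarrow> 'm set" where
  "qadd X Y = set_plus X Y"

definition qscale :: "('r \<Rightarrow> 'm::ab_group_add \<Rightarrow> 'm) \<Rightarrow> ('m \<times> 'm) set \<Rightarrow> 'r \<Rightarrow> 'm set \<Rightarrow> 'm set" where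
  "qscale s C r X = set_plus (s r ` X) (flat C)"

definition theta :: "('m::ab_group_add \<times> 'm) set \<Rightarrow> 'm set \<Rightarrow> 'm set" where
  "theta C X = (THE Y. \<exists>m m'. m \<in> sharp C \<and> X = coset C m \<and>
       m' \<in> sharp C \<inter> set_plus (flat C) (C `` {m}) \<and> Y = coset C m')"

definition qmap :: "('l::ab_group_add \<times> 'l) set \<Rightarrow> ('m::ab_group_add \<times> 'm) set \<Rightarrow> ('l \<Rightarrow> 'm) \<Rightarrow> 'l set \<Rightarrow> 'm set" where
  "qmap B C f X = coset C (f (SOME l. l \<in> sharp B \<and> X = coset B l))"

end

theory Submission
  imports Defs
begin

text \<open>
  For a linear relation C, the sets C'' and C' of starting points of infinite, resp. eventually
  zero, C-paths are submodules, hence so are sharp C and flat C. The key fact is that a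
  C-successor of an element of flat C that lies in sharp C lies again in flat C: after
  subtracting a successor inside flat C it becomes a successor of 0 lying in C'', hence an
  element of C'' \<inter> (C\<inverse>)'. So theta C (m + flat C) = m' + flat C for every C-step
  m \<rightarrow> m' inside sharp C. Morphisms of Rel_R map C-paths to C-paths, so they preserve
  C'', C', sharp, flat and C-steps, and every functor law is a computation on representatives.
  For the graph of an automorphism T every element starts a path in both directions, while
  injectivity forces eventually zero paths to vanish identically; thus sharp = M, flat = 0
  and theta = T.
\<close>

section \<open>Paths of a linear relation\<close>

lemma graph_iff [simp]: "(x, y) \<in> graph T \<longleftrightarrow> y = T x"
  by (auto simp: graph_def)

lemma set_plus_iff: "z \<in> set_plus A B \<longleftrightarrow> (\<exists>a\<in>A. \<exists>b\<in>B. z = a + b)"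
  by (auto simp: set_plus_def)

lemma is_rel_converse: "is_rel s C \<Longrightarrow> is_rel s (C\<inverse>)"
  unfolding is_rel_def by auto

lemma dprime_iff_step: "x \<in> dprime C \<longleftrightarrow> (\<exists>y. (x, y) \<in> C \<and> y \<in> dprime C)"
proof
  assume "x \<in> dprime C"
  then obtain s where "s 0 = x" "\<forall>n. s (Suc n) \<in> C `` {s n}"
    by (auto simp: dprime_def)
  then show "\<exists>y. (x, y) \<in> C \<and> y \<in> dprime C"
    unfolding dprime_def by (auto intro!: exI[of _ "s 1"] exI[of _ "s \<circ> Suc"])
next
  assume "\<exists>y. (x, y) \<in> C \<and> y \<in> dprime C"
  then obtain s where "(x, s 0) \<in> C" "\<forall>n. s (Suc n) \<in> C `` {s n}"
    by (auto simp: dprime_def)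
  then show "x \<in> dprime C"
    unfolding dprime_def by (auto intro!: exI[of _ "case_nat x s"] split: nat.split)
qed

lemma sprime_iff_step: "x \<in> sprime C \<longleftrightarrow> (\<exists>y. (x, y) \<in> C \<and> y \<in> sprime C)"
proof
  assume "x \<in> sprime C"
  then obtain s N where "s 0 = x" "\<forall>n. s (Suc n) \<in> C `` {s n}" "\<forall>n\<ge>N. s n = 0"
    by (auto simp: sprime_def)
  then show "\<exists>y. (x, y) \<in> C \<and> y \<in> sprime C"
    unfolding sprime_def by (auto intro!: exI[of _ "s 1"] exI[of _ "s \<circ> Suc"] exI[of _ N])
next
  assume "\<exists>y. (x, y) \<in> C \<and> y \<in> sprime C"
  then obtain s N where "(x, s 0) \<in> C" "\<forall>n. s (Suc n) \<in> C `` {s n}" "\<forall>n\<ge>N. s n = 0"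
    by (auto simp: sprime_def)
  then show "x \<in> sprime C"
    unfolding sprime_def
    by (auto intro!: exI[of _ "case_nat x s"] exI[of _ "Suc N"] split: nat.split)
qed

lemma sprime_subset_dprime: "sprime C \<subseteq> dprime C"
  unfolding sprime_def dprime_def by blast

lemma dprime_image:
  assumes "\<And>x y. (x, y) \<in> B \<Longrightarrow> (f x, f y) \<in> C" and "x \<in> dprime B"
  shows "f x \<in> dprime C"
proof -
  obtain s where "s 0 = x" "\<forall>n. s (Suc n) \<in> B `` {s n}"
    using assms(2) by (auto simp: dprime_def)
  then show ?thesis
    using assms(1) unfolding dprime_def by (auto intro!: exI[of _ "f \<circ> s"])
qed

lemma sprime_image:
  assumes "\<And>x y. (x, y) \<in> B \<Longrightarrow> (f x, f y) \<in> C" and "f 0 = 0" and "x \<in> sprime B"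
  shows "f x \<in> sprime C"
proof -
  obtain s N where "s 0 = x" "\<forall>n. s (Suc n) \<in> B `` {s n}" "\<forall>n\<ge>N. s n = 0"
    using assms(3) by (auto simp: sprime_def)
  then show ?thesis
    using assms(1,2) unfolding sprime_def by (auto intro!: exI[of _ "f \<circ> s"] exI[of _ N])
qed

lemma sharp_image:
  assumes "\<And>x y. (x, y) \<in> B \<Longrightarrow> (f x, f y) \<in> C" and "x \<in> sharp B"
  shows "f x \<in> sharp C"
  using assms dprime_image[of "B\<inverse>" f "C\<inverse>"] dprime_image[of B f C]
  unfolding sharp_def by blast

lemma sharp_has_successor:
  assumes "x \<in> sharp C"
  obtains y where "(x, y) \<in> C" and "y \<in> sharp C"
  using assms dprime_iff_step[of x C] dprime_iff_step[of _ "C\<inverse>"]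
  unfolding sharp_def by blast

lemma flat_image:
  assumes "module_hom s1 s2 f" and "\<And>x y. (x, y) \<in> B \<Longrightarrow> (f x, f y) \<in> C" and "x \<in> flat B"
  shows "f x \<in> flat C"
proof -
  have f0: "f 0 = 0"
    using module_hom.zero[OF assms(1)] .
  have conv: "\<And>x y. (x, y) \<in> B\<inverse> \<Longrightarrow> (f x, f y) \<in> C\<inverse>"
    using assms(2) by blast
  obtain a b where "a \<in> dprime B" "a \<in> sprime (B\<inverse>)" "b \<in> dprime (B\<inverse>)" "b \<in> sprime B"
    and x: "x = a + b"
    using assms(3) unfolding flat_def set_plus_iff by blast
  then have "f a \<in> dprime C \<inter> sprime (C\<inverse>)" and "f b \<in> dprime (C\<inverse>) \<inter> sprime C"
    using assms(2) conv f0 dprime_image[of B f C] sprime_image[of B f C]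
      dprime_image[of "B\<inverse>" f "C\<inverse>"] sprime_image[of "B\<inverse>" f "C\<inverse>"] by blast+
  moreover have "f x = f a + f b"
    using assms(1) x by (simp add: module_hom_iff)
  ultimately show ?thesis
    unfolding flat_def set_plus_iff by blast
qed

section \<open>The quotient sharp C / flat C and theta\<close>

lemma coset_iff: "z \<in> coset C a \<longleftrightarrow> z - a \<in> flat C"
  unfolding coset_def by (auto intro: image_eqI[of z _ "z - a"])

context module
begin

lemma subspace_set_plus:
  assumes "subspace A" and "subspace B"
  shows "subspace (set_plus A B)"
proof (rule subspaceI)
  show "0 \<in> set_plus A B"
    using subspace_0[OF assms(1)] subspace_0[OF assms(2)] unfolding set_plus_iff by (metis add_0)
  show "x + y \<in> set_plus A B" if hx: "x \<in> set_plus A B" and hy: "y \<in> set_plus A B" for x y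
  proof -
    obtain a b a' b' where "a \<in> A" "b \<in> B" "x = a + b" "a' \<in> A" "b' \<in> B" "y = a' + b'"
      using hx hy by (auto simp: set_plus_iff)
    then have "a + a' \<in> A" "b + b' \<in> B" "x + y = (a + a') + (b + b')"
      using assms by (simp_all add: subspace_add algebra_simps)
    then show ?thesis
      unfolding set_plus_iff by blast
  qed
  show "c *s x \<in> set_plus A B" if "x \<in> set_plus A B" for c x
    using that subspace_scale[OF assms(1)] subspace_scale[OF assms(2)]
    unfolding set_plus_iff by (metis scale_right_distrib)
qed

lemma is_rel_diff:
  assumes "is_rel scale C" and "(x, y) \<in> C" and "(x', y') \<in> C"
  shows "(x - x', y - y') \<in> C"
proof -
  have "(x + (-1) *s x', y + (-1) *s y') \<in> C"
    using assms unfolding is_rel_def by blast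
  then show ?thesis
    by (simp add: scale_minus_left)
qed

lemma dprime_subspace:
  assumes "is_rel scale C"
  shows "subspace (dprime C)"
proof (rule subspaceI)
  show "0 \<in> dprime C"
    using assms unfolding is_rel_def dprime_def by (auto intro!: exI[of _ "\<lambda>n. 0"])
  show "x + y \<in> dprime C" if hx: "x \<in> dprime C" and hy: "y \<in> dprime C" for x y
  proof -
    obtain u v where "u 0 = x" "\<forall>n. u (Suc n) \<in> C `` {u n}" "v 0 = y" "\<forall>n. v (Suc n) \<in> C `` {v n}"
      using hx hy unfolding dprime_def by blast
    then show ?thesis
      using assms unfolding is_rel_def dprime_def by (auto intro!: exI[of _ "\<lambda>n. u n + v n"])
  qed
  show "c *s x \<in> dprime C" if "x \<in> dprime C" for c x
    using assms that dprime_image[of C "scale c" C] unfolding is_rel_def by blast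
qed

lemma sprime_subspace:
  assumes "is_rel scale C"
  shows "subspace (sprime C)"
proof (rule subspaceI)
  show "0 \<in> sprime C"
    using assms unfolding is_rel_def sprime_def by (auto intro!: exI[of _ "\<lambda>n. 0"])
  show "x + y \<in> sprime C" if hx: "x \<in> sprime C" and hy: "y \<in> sprime C" for x y
  proof -
    obtain u v N M where "u 0 = x" "\<forall>n. u (Suc n) \<in> C `` {u n}" "\<forall>n\<ge>N. u n = 0"
      and "v 0 = y" "\<forall>n. v (Suc n) \<in> C `` {v n}" "\<forall>n\<ge>M. v n = 0"
      using hx hy unfolding sprime_def by blast
    then show ?thesis
      using assms unfolding is_rel_def sprime_def
      by (auto intro!: exI[of _ "\<lambda>n. u n + v n"] exI[of _ "max N M"])
  qed
  show "c *s x \<in> sprime C" if "x \<in> sprime C" for c x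
    using assms that sprime_image[of C "scale c" C] unfolding is_rel_def by simp
qed

lemma sharp_subspace: "is_rel scale C \<Longrightarrow> subspace (sharp C)"
  unfolding sharp_def by (intro subspace_inter dprime_subspace is_rel_converse)

lemma flat_subspace: "is_rel scale C \<Longrightarrow> subspace (flat C)"
  unfolding flat_def
  by (intro subspace_set_plus subspace_inter dprime_subspace sprime_subspace is_rel_converse)

lemma flat_subset_sharp:
  assumes "is_rel scale C"
  shows "flat C \<subseteq> sharp C"
proof
  fix x assume "x \<in> flat C"
  then obtain a b where "a \<in> sharp C" "b \<in> sharp C" "x = a + b"
    using sprime_subset_dprime unfolding flat_def sharp_def set_plus_iff by blast
  then show "x \<in> sharp C"
    using subspace_add[OF sharp_subspace[OF assms]] by blast
qed

lemma coset_eq_iff: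
  assumes "is_rel scale C"
  shows "coset C a = coset C b \<longleftrightarrow> a - b \<in> flat C"
proof
  note F = flat_subspace[OF assms]
  assume "coset C a = coset C b"
  moreover have "a \<in> coset C a"
    using subspace_0[OF F] by (simp add: coset_iff)
  ultimately show "a - b \<in> flat C"
    by (simp add: coset_iff)
next
  note F = flat_subspace[OF assms]
  assume "a - b \<in> flat C"
  moreover have "z - b = (z - a) + (a - b)" "z - a = (z - b) - (a - b)" for z
    by simp_all
  ultimately show "coset C a = coset C b"
    using subspace_add[OF F] subspace_diff[OF F] by (metis set_eqI coset_iff)
qed

lemma coset_add:
  assumes "is_rel scale C"
  shows "qadd (coset C a) (coset C b) = coset C (a + b)"
proof (rule set_eqI, rule iffI)
  note F = flat_subspace[OF assms]
  fix z assume "z \<in> qadd (coset C a) (coset C b)"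
  then obtain x y where "x - a \<in> flat C" "y - b \<in> flat C" "z = x + y"
    unfolding qadd_def set_plus_iff by (auto simp: coset_iff)
  moreover have "x + y - (a + b) = (x - a) + (y - b)"
    by simp
  ultimately show "z \<in> coset C (a + b)"
    using subspace_add[OF F] unfolding coset_iff by metis
next
  note F = flat_subspace[OF assms]
  fix z assume "z \<in> coset C (a + b)"
  then have "z - b \<in> coset C a" and "b \<in> coset C b"
    using subspace_0[OF F] by (simp_all add: coset_iff algebra_simps)
  then show "z \<in> qadd (coset C a) (coset C b)"
    unfolding qadd_def set_plus_iff by (metis diff_add_cancel)
qed

lemma coset_scale:
  assumes "is_rel scale C"
  shows "qscale scale C r (coset C a) = coset C (r *s a)"
proof (rule set_eqI, rule iffI)
  note F = flat_subspace[OF assms]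
  fix z assume "z \<in> qscale scale C r (coset C a)"
  then obtain x d where "x - a \<in> flat C" "d \<in> flat C" "z = r *s x + d"
    unfolding qscale_def set_plus_iff by (auto simp: coset_iff)
  moreover have "r *s x + d - r *s a = r *s (x - a) + d"
    by (simp add: scale_right_diff_distrib)
  ultimately show "z \<in> coset C (r *s a)"
    using subspace_add[OF F] subspace_scale[OF F] unfolding coset_iff by metis
next
  note F = flat_subspace[OF assms]
  fix z assume "z \<in> coset C (r *s a)"
  moreover have "r *s a \<in> scale r ` coset C a"
    using subspace_0[OF F] by (simp add: coset_iff)
  ultimately show "z \<in> qscale scale C r (coset C a)"
    unfolding qscale_def set_plus_iff coset_iff by (metis add.commute diff_add_cancel)
qed

lemma zero_successor_in_flat:
  assumes "is_rel scale C" and "(0, y) \<in> C" and "y \<in> dprime C"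
  shows "y \<in> flat C"
proof -
  have C': "is_rel scale (C\<inverse>)"
    using assms(1) by (rule is_rel_converse)
  have "y \<in> sprime (C\<inverse>)"
    using sprime_iff_step[of y "C\<inverse>"] assms(2) subspace_0[OF sprime_subspace[OF C']] by blast
  moreover have "0 \<in> dprime (C\<inverse>) \<inter> sprime C"
    using subspace_0[OF dprime_subspace[OF C']] subspace_0[OF sprime_subspace[OF assms(1)]] by blast
  moreover have "y = y + 0"
    by simp
  ultimately show ?thesis
    using assms(3) unfolding flat_def set_plus_iff by blast
qed

lemma flat_has_successor:
  assumes "is_rel scale C" and "x \<in> flat C"
  obtains y where "(x, y) \<in> C" and "y \<in> flat C"
proof -
  obtain a b where a: "a \<in> dprime C" "a \<in> sprime (C\<inverse>)"
    and b: "b \<in> dprime (C\<inverse>)" "b \<in> sprime C" and x: "x = a + b"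
    using assms(2) unfolding flat_def set_plus_iff by blast
  obtain a' where a': "(a, a') \<in> C" "a' \<in> dprime C"
    using a(1) dprime_iff_step by blast
  obtain b' where b': "(b, b') \<in> C" "b' \<in> sprime C"
    using b(2) sprime_iff_step by blast
  have "a' \<in> sprime (C\<inverse>)" and "b' \<in> dprime (C\<inverse>)"
    using a' b' a(2) b(1) sprime_iff_step[of a' "C\<inverse>"] dprime_iff_step[of b' "C\<inverse>"] by blast+
  then have "a' + b' \<in> flat C"
    using a' b' unfolding flat_def set_plus_iff by blast
  moreover have "(x, a' + b') \<in> C"
    using assms(1) a'(1) b'(1) x unfolding is_rel_def by blast
  ultimately show thesis
    using that by blast
qed

lemma flat_successor_in_flat:
  assumes "is_rel scale C" and "(x, y) \<in> C" and "x \<in> flat C" and "y \<in> sharp C"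
  shows "y \<in> flat C"
proof -
  note F = flat_subspace[OF assms(1)]
  obtain y0 where y0: "(x, y0) \<in> C" "y0 \<in> flat C"
    using flat_has_successor[OF assms(1,3)] .
  have "(0, y - y0) \<in> C"
    using is_rel_diff[OF assms(1,2) y0(1)] by simp
  moreover have "y - y0 \<in> sharp C"
    using subspace_diff[OF sharp_subspace[OF assms(1)] assms(4)] flat_subset_sharp[OF assms(1)] y0(2)
    by blast
  ultimately have "y - y0 \<in> flat C"
    using zero_successor_in_flat[OF assms(1)] unfolding sharp_def by blast
  then show ?thesis
    using subspace_add[OF F _ y0(2)] by (metis diff_add_cancel)
qed

lemma theta_coset:
  assumes "is_rel scale C" and "m \<in> sharp C" and "(m, m') \<in> C" and "m' \<in> sharp C"
  shows "theta C (coset C m) = coset C m'"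
  unfolding theta_def
proof (rule the_equality)
  have "m' \<in> set_plus (flat C) (C `` {m})"
    using assms(3) subspace_0[OF flat_subspace[OF assms(1)]] unfolding set_plus_iff
    by (intro bexI[of _ 0] bexI[of _ m']) auto
  then show "\<exists>m1 m1'. m1 \<in> sharp C \<and> coset C m = coset C m1 \<and>
      m1' \<in> sharp C \<inter> set_plus (flat C) (C `` {m1}) \<and> coset C m' = coset C m1'"
    using assms(2,4) by blast
next
  fix Y
  assume "\<exists>m1 m1'. m1 \<in> sharp C \<and> coset C m = coset C m1 \<and>
      m1' \<in> sharp C \<inter> set_plus (flat C) (C `` {m1}) \<and> Y = coset C m1'"
  then obtain m1 m1' where m1: "coset C m = coset C m1" "m1' \<in> sharp C" "Y = coset C m1'"
    and "m1' \<in> set_plus (flat C) (C `` {m1})"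
    by blast
  then obtain a c where a: "a \<in> flat C" and c: "(m1, c) \<in> C" "m1' = a + c"
    unfolding set_plus_iff by blast
  note F = flat_subspace[OF assms(1)] and S = sharp_subspace[OF assms(1)]
  have "(m - m1, m' - c) \<in> C"
    using is_rel_diff[OF assms(1,3) c(1)] .
  moreover have "m - m1 \<in> flat C"
    using m1(1) coset_eq_iff[OF assms(1)] by blast
  moreover have "m' - c \<in> sharp C"
  proof -
    have "c = m1' - a" and "a \<in> sharp C"
      using c(2) a flat_subset_sharp[OF assms(1)] by auto
    then show ?thesis
      using subspace_diff[OF S assms(4) subspace_diff[OF S m1(2)]] by blast
  qed
  ultimately have "m' - c \<in> flat C"
    by (rule flat_successor_in_flat[OF assms(1)])
  moreover have "m' - m1' = (m' - c) - a"
    using c(2) by simp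
  ultimately have "m' - m1' \<in> flat C"
    using subspace_diff[OF F _ a] by metis
  then have "coset C m' = coset C m1'"
    using coset_eq_iff[OF assms(1)] by blast
  then show "Y = coset C m'"
    using m1(3) by simp
qed

end

section \<open>The functor sharp/flat\<close>

lemma quotE:
  assumes "X \<in> quot B"
  obtains l where "l \<in> sharp B" and "X = coset B l"
  using assms unfolding quot_def by blast

lemma rel_mor_id: "module s \<Longrightarrow> rel_mor s s B B id"
  by (simp add: rel_mor_def module.module_hom_id)

lemma rel_mor_comp: "rel_mor s1 s2 B C f \<Longrightarrow> rel_mor s2 s3 C D g \<Longrightarrow> rel_mor s1 s3 B D (g \<circ> f)"
  by (auto simp: rel_mor_def intro: module_hom_compose)

lemma rel_mor_add:
  assumes "is_rel s2 C" and "rel_mor s1 s2 B C f" and "rel_mor s1 s2 B C g"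
  shows "rel_mor s1 s2 B C (\<lambda>x. f x + g x)"
proof -
  have "module_pair s1 s2"
    using assms(2) by (simp add: rel_mor_def module_hom_iff module_pair.intro)
  then show ?thesis
    using assms module_pair.module_hom_add unfolding rel_mor_def is_rel_def by metis
qed

lemma rel_mor_scale:
  assumes "is_rel s2 C" and "rel_mor s1 s2 B C f"
  shows "rel_mor s1 s2 B C (\<lambda>x. s2 r (f x))"
proof -
  have "module_pair s1 s2"
    using assms(2) by (simp add: rel_mor_def module_hom_iff module_pair.intro)
  then show ?thesis
    using assms module_pair.module_hom_scale unfolding rel_mor_def is_rel_def by metis
qed

lemma qmap_coset:
  assumes "rel_mor s1 s2 B C f" and "is_rel s1 B" and "is_rel s2 C" and "l \<in> sharp B"
  shows "qmap B C f (coset B l) = coset C (f l)"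
proof -
  have f: "module_hom s1 s2 f" and fBC: "\<And>x y. (x, y) \<in> B \<Longrightarrow> (f x, f y) \<in> C"
    using assms(1) unfolding rel_mor_def by blast+
  have "module s1" and "module s2"
    using f by (simp_all add: module_hom_iff)
  define l' where "l' = (SOME l'. l' \<in> sharp B \<and> coset B l = coset B l')"
  have "\<exists>l'. l' \<in> sharp B \<and> coset B l = coset B l'"
    using assms(4) by blast
  then have "l' \<in> sharp B \<and> coset B l = coset B l'"
    unfolding l'_def by (rule someI_ex)
  then have "l - l' \<in> flat B"
    using module.coset_eq_iff[OF \<open>module s1\<close> assms(2)] by blast
  then have "f l - f l' \<in> flat C"
    using flat_image[OF f fBC] by (simp add: module_hom.diff[OF f, symmetric])
  then have "coset C (f l) = coset C (f l')"
    using module.coset_eq_iff[OF \<open>module s2\<close> assms(3)] by blast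
  then show ?thesis
    unfolding qmap_def l'_def[symmetric] by simp
qed

lemma qmap_id:
  assumes "module s" and "is_rel s B" and "X \<in> quot B"
  shows "qmap B B id X = X"
  using assms(3) qmap_coset[OF rel_mor_id[OF assms(1)] assms(2,2)] by (metis id_apply quotE)

lemma qmap_comp:
  assumes "rel_mor s1 s2 B C f" and "rel_mor s2 s3 C D g"
    and "is_rel s1 B" and "is_rel s2 C" and "is_rel s3 D" and "X \<in> quot B"
  shows "qmap B D (g \<circ> f) X = qmap C D g (qmap B C f X)"
proof -
  obtain l where l: "l \<in> sharp B" "X = coset B l"
    using assms(6) by (rule quotE)
  have "f l \<in> sharp C"
    using assms(1) l(1) sharp_image unfolding rel_mor_def by blast
  then show ?thesis
    using l qmap_coset[OF rel_mor_comp[OF assms(1,2)] assms(3,5) l(1)]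
      qmap_coset[OF assms(1,3,4) l(1)] qmap_coset[OF assms(2,4,5)] by simp
qed

lemma qmap_add:
  assumes "rel_mor s1 s2 B C f" and "rel_mor s1 s2 B C g"
    and "is_rel s1 B" and "is_rel s2 C" and "X \<in> quot B"
  shows "qmap B C (\<lambda>x. f x + g x) X = qadd (qmap B C f X) (qmap B C g X)"
proof -
  obtain l where l: "l \<in> sharp B" "X = coset B l"
    using assms(5) by (rule quotE)
  have "module s2"
    using assms(1) by (simp add: rel_mor_def module_hom_iff)
  then show ?thesis
    using l qmap_coset[OF rel_mor_add[OF assms(4,1,2)] assms(3,4) l(1)]
      qmap_coset[OF assms(1,3,4) l(1)] qmap_coset[OF assms(2,3,4) l(1)]
      module.coset_add[OF _ assms(4)] by simp
qed

lemma qmap_scale: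
  assumes "rel_mor s1 s2 B C f" and "is_rel s1 B" and "is_rel s2 C" and "X \<in> quot B"
  shows "qmap B C (\<lambda>x. s2 r (f x)) X = qscale s2 C r (qmap B C f X)"
proof -
  obtain l where l: "l \<in> sharp B" "X = coset B l"
    using assms(4) by (rule quotE)
  have "module s2"
    using assms(1) by (simp add: rel_mor_def module_hom_iff)
  then show ?thesis
    using l qmap_coset[OF rel_mor_scale[OF assms(3,1)] assms(2,3) l(1)]
      qmap_coset[OF assms(1,2,3) l(1)] module.coset_scale[OF _ assms(3)] by simp
qed

lemma qmap_qadd:
  assumes "rel_mor s1 s2 B C f" and "is_rel s1 B" and "is_rel s2 C"
    and "X \<in> quot B" and "Y \<in> quot B"
  shows "qmap B C f (qadd X Y) = qadd (qmap B C f X) (qmap B C f Y)"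
proof -
  obtain l l' where l: "l \<in> sharp B" "X = coset B l" and l': "l' \<in> sharp B" "Y = coset B l'"
    using assms(4,5) by (meson quotE)
  have "module s1" and "module s2" and "f (l + l') = f l + f l'"
    using assms(1) by (simp_all add: rel_mor_def module_hom_iff)
  moreover have "l + l' \<in> sharp B"
    using module.subspace_add[OF \<open>module s1\<close> module.sharp_subspace[OF \<open>module s1\<close> assms(2)] l(1) l'(1)] .
  ultimately show ?thesis
    using l l' qmap_coset[OF assms(1,2,3)]
      module.coset_add[OF _ assms(2)] module.coset_add[OF _ assms(3)] by simp
qed

lemma qmap_qscale:
  assumes "rel_mor s1 s2 B C f" and "is_rel s1 B" and "is_rel s2 C" and "X \<in> quot B"
  shows "qmap B C f (qscale s1 B r X) = qscale s2 C r (qmap B C f X)"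
proof -
  obtain l where l: "l \<in> sharp B" "X = coset B l"
    using assms(4) by (rule quotE)
  have "module s1" and "module s2" and "f (s1 r l) = s2 r (f l)"
    using assms(1) by (simp_all add: rel_mor_def module_hom_iff)
  moreover have "s1 r l \<in> sharp B"
    using module.subspace_scale[OF \<open>module s1\<close> module.sharp_subspace[OF \<open>module s1\<close> assms(2)] l(1)] .
  ultimately show ?thesis
    using l qmap_coset[OF assms(1,2,3)]
      module.coset_scale[OF _ assms(2)] module.coset_scale[OF _ assms(3)] by simp
qed

lemma qmap_theta:
  assumes "rel_mor s1 s2 B C f" and "is_rel s1 B" and "is_rel s2 C" and "X \<in> quot B"
  shows "qmap B C f (theta B X) = theta C (qmap B C f X)"
proof -
  obtain l where l: "l \<in> sharp B" "X = coset B l"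
    using assms(4) by (rule quotE)
  obtain l1 where l1: "(l, l1) \<in> B" "l1 \<in> sharp B"
    using l(1) by (rule sharp_has_successor)
  have "module s1" and "module s2" and fBC: "\<And>x y. (x, y) \<in> B \<Longrightarrow> (f x, f y) \<in> C"
    using assms(1) by (simp_all add: rel_mor_def module_hom_iff)
  have "theta B X = coset B l1"
    using module.theta_coset[OF \<open>module s1\<close> assms(2) l(1) l1] l(2) by simp
  moreover have "f l \<in> sharp C" and "f l1 \<in> sharp C"
    using sharp_image[of B f C, OF fBC] l(1) l1(2) by blast+
  then have "theta C (coset C (f l)) = coset C (f l1)"
    using module.theta_coset[OF \<open>module s2\<close> assms(3)] fBC[OF l1(1)] by blast
  ultimately show ?thesis
    using l l1(2) qmap_coset[OF assms(1,2,3)] by simp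
qed

section \<open>The functor graph_T\<close>

lemma graph_is_rel:
  assumes "module_hom s s T"
  shows "is_rel s (graph T)"
  using assms module_hom.zero[OF assms] unfolding is_rel_def module_hom_iff by simp

lemma rel_mor_graph:
  assumes "module_hom s1 s2 g" and "g \<circ> T = T' \<circ> g"
  shows "rel_mor s1 s2 (graph T) (graph T') g"
  using assms unfolding rel_mor_def by (metis comp_apply graph_iff)

lemma sprime_subset_zero:
  assumes "\<And>x. (x, 0) \<in> C \<Longrightarrow> x = 0"
  shows "sprime C \<subseteq> {0}"
proof
  fix x assume "x \<in> sprime C"
  then obtain s N where s: "s 0 = x" "\<forall>n. (s n, s (Suc n)) \<in> C" "\<forall>n\<ge>N. s n = 0"
    by (auto simp: sprime_def)
  have "s n = 0" if "n \<le> N" for n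
    using that
  proof (induction n rule: inc_induct)
    case base
    then show ?case using s(3) by simp
  next
    case (step n)
    then show ?case using assms s(2) by metis
  qed
  then show "x \<in> {0}"
    using s(1) by simp
qed

lemma sharp_graph:
  assumes "bij T"
  shows "sharp (graph T) = UNIV"
proof -
  have "x \<in> dprime (graph T)" for x
    unfolding dprime_def by (auto intro!: exI[of _ "\<lambda>n. (T ^^ n) x"])
  moreover have "x \<in> dprime ((graph T)\<inverse>)" for x
    using surj_f_inv_f[OF bij_is_surj[OF assms]] unfolding dprime_def
    by (auto intro!: exI[of _ "\<lambda>n. (inv T ^^ n) x"])
  ultimately show ?thesis
    unfolding sharp_def by blast
qed

lemma flat_graph:
  assumes "module_hom s s T" and "inj T"
  shows "flat (graph T) = {0}"
proof
  have T0: "T 0 = 0"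
    using module_hom.zero[OF assms(1)] .
  have "sprime (graph T) \<subseteq> {0}"
    by (rule sprime_subset_zero) (use assms(2) T0 in \<open>metis graph_iff injD\<close>)
  moreover have "sprime ((graph T)\<inverse>) \<subseteq> {0}"
    by (rule sprime_subset_zero) (use T0 in auto)
  ultimately show "flat (graph T) \<subseteq> {0}"
    unfolding flat_def by (force simp: set_plus_iff)
  have "module s"
    using assms(1) by (simp add: module_hom_iff)
  then show "{0} \<subseteq> flat (graph T)"
    using module.subspace_0[OF _ module.flat_subspace[OF _ graph_is_rel[OF assms(1)]]] by simp
qed

lemma coset_graph: "module_hom s s T \<Longrightarrow> inj T \<Longrightarrow> coset (graph T) x = {x}"
  unfolding coset_def by (simp add: flat_graph)

lemma theta_graph:
  assumes "module_hom s s T" and "bij T"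
  shows "theta (graph T) {x} = {T x}"
proof -
  have "module s"
    using assms(1) by (simp add: module_hom_iff)
  then have "theta (graph T) (coset (graph T) x) = coset (graph T) (T x)"
    using module.theta_coset[OF _ graph_is_rel[OF assms(1)]] sharp_graph[OF assms(2)] by simp
  then show ?thesis
    using coset_graph[OF assms(1) bij_is_inj[OF assms(2)]] by simp
qed

lemma qmap_graph:
  assumes "module_hom s1 s1 T" and "bij T" and "module_hom s2 s2 T'" and "inj T'"
    and "module_hom s1 s2 g" and "g \<circ> T = T' \<circ> g"
  shows "qmap (graph T) (graph T') g {x} = {g x}"
  using qmap_coset[OF rel_mor_graph[OF assms(5,6)] graph_is_rel[OF assms(1)] graph_is_rel[OF assms(3)]]
    sharp_graph[OF assms(2)] coset_graph[OF assms(1) bij_is_inj[OF assms(2)]] coset_graph[OF assms(3,4)]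
  by simp

theorem lemma4p7:
  fixes sL :: "'r::comm_ring_1 \<Rightarrow> 'l::ab_group_add \<Rightarrow> 'l"
    and sM :: "'r \<Rightarrow> 'm::ab_group_add \<Rightarrow> 'm"
    and sN :: "'r \<Rightarrow> 'n::ab_group_add \<Rightarrow> 'n"
  assumes "module sL" and "module sM" and "module sN"
  shows
  \<comment> \<open>sharp/flat on morphisms: well defined, and R[T,T^-1]-linear (R-linear and commuting with theta)\<close>
  "(\<forall>B C f. is_rel sL B \<and> is_rel sM C \<and> rel_mor sL sM B C f \<longrightarrow>
      (\<forall>l\<in>sharp B. f l \<in> sharp C) \<and>
      (\<forall>l\<in>sharp B. \<forall>l'\<in>sharp B. coset B l = coset B l' \<longrightarrow> coset C (f l) = coset C (f l')) \<and>
      (\<forall>X\<in>quot B. \<forall>Y\<in>quot B. qmap B C f (qadd X Y) = qadd (qmap B C f X) (qmap B C f Y)) \<and>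
      (\<forall>r. \<forall>X\<in>quot B. qmap B C f (qscale sL B r X) = qscale sM C r (qmap B C f X)) \<and>
      (\<forall>X\<in>quot B. qmap B C f (theta B X) = theta C (qmap B C f X)))
   \<comment> \<open>functoriality: identities\<close>
   \<and> (\<forall>B. is_rel sL B \<longrightarrow> rel_mor sL sL B B id \<and> (\<forall>X\<in>quot B. qmap B B id X = X))
   \<comment> \<open>functoriality: composition\<close>
   \<and> (\<forall>B C D f g. is_rel sL B \<and> is_rel sM C \<and> is_rel sN D \<and>
        rel_mor sL sM B C f \<and> rel_mor sM sN C D g \<longrightarrow>
        rel_mor sL sN B D (g \<circ> f) \<and>
        (\<forall>X\<in>quot B. qmap B D (g \<circ> f) X = qmap C D g (qmap B C f X)))
   \<comment> \<open>R-linearity of the functor sharp/flat\<close>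
   \<and> (\<forall>B C f g r. is_rel sL B \<and> is_rel sM C \<and> rel_mor sL sM B C f \<and> rel_mor sL sM B C g \<longrightarrow>
        rel_mor sL sM B C (\<lambda>x. f x + g x) \<and> rel_mor sL sM B C (\<lambda>x. sM r (f x)) \<and>
        (\<forall>X\<in>quot B. qmap B C (\<lambda>x. f x + g x) X = qadd (qmap B C f X) (qmap B C g X)) \<and>
        (\<forall>X\<in>quot B. qmap B C (\<lambda>x. sM r (f x)) X = qscale sM C r (qmap B C f X)))
   \<comment> \<open>graph_T: objects are sent to Rel_R objects, R[T,T^-1]-linear maps to Rel_R morphisms\<close>
   \<and> (\<forall>T. module_hom sL sL T \<and> bij T \<longrightarrow> is_rel sL (graph T))
   \<and> (\<forall>T T' g. module_hom sL sL T \<and> bij T \<and> module_hom sM sM T' \<and> bij T' \<and>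
        module_hom sL sM g \<and> g \<circ> T = T' \<circ> g \<longrightarrow> rel_mor sL sM (graph T) (graph T') g)
   \<comment> \<open>(sharp/flat) o graph_T is the identity (X/0 identified with X via x |-> {x})\<close>
   \<and> (\<forall>T. module_hom sL sL T \<and> bij T \<longrightarrow>
        sharp (graph T) = UNIV \<and> flat (graph T) = {0} \<and>
        (\<forall>x. coset (graph T) x = {x}) \<and>
        (\<forall>x. theta (graph T) {x} = {T x}))
   \<and> (\<forall>T T' g. module_hom sL sL T \<and> bij T \<and> module_hom sM sM T' \<and> bij T' \<and>
        module_hom sL sM g \<and> g \<circ> T = T' \<circ> g \<longrightarrow>
        (\<forall>x. qmap (graph T) (graph T') g {x} = {g x}))"
proof (intro conjI allI impI ballI; (elim conjE)?)
  show "f l \<in> sharp C" if "rel_mor sL sM B C f" "l \<in> sharp B" for B C f l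
    using that sharp_image[of B f C] unfolding rel_mor_def by blast
  show "coset C (f l) = coset C (f l')"
    if "rel_mor sL sM B C f" "is_rel sL B" "is_rel sM C" "l \<in> sharp B" "l' \<in> sharp B"
      and "coset B l = coset B l'" for B C f l l'
    using that qmap_coset[of sL sM B C f] by metis
qed (use assms in \<open>(simp_all add: qmap_qadd qmap_qscale qmap_theta qmap_id qmap_comp qmap_add qmap_scale
    rel_mor_id rel_mor_comp rel_mor_add rel_mor_scale graph_is_rel rel_mor_graph
    sharp_graph flat_graph coset_graph theta_graph qmap_graph bij_is_inj)\<close>)

end
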